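(* Let $n$ be a positive integer and let $l$ be an indeterminate. For $1\le i,j\le n$ define $$b_{i,j}=\sum_{p\in\mathbb{Z}}(-1)^j\binom{j-1}{p}\binom{p-n+j-l+i-2}{2i-1}$$ and $$y_{i,j}=\sum_{t\in\mathbb{Z}}2(-1)^{t+j}3^{1-j}\frac{(j)_j}{(1)_{j-t}\,(1)_{t-i}\,(3-i+2n+2l-2t)_i}.$$ Then, as an identity of rational functions in $l$, for all $1\le i\le j\le n$, $$\sum_{k=1}^n b_{i,k}\,y_{k,j}=\begin{cases}1,& i=j,\\ 0,& i<j,\end{cases}$$ i.e. the product $(b_{i,j})_{1\le i,j\le n}\cdot(y_{i,j})_{1\le i,j\le n}$ is lower triangular with all diagonal entries equal to $1$.
   Context: Binomial coefficients: for an integer $k\ge0$, $\binom{x}{k}=\frac{x(x-1)\cdots(x-k+1)}{k!}$ (a polynomial in $x$), and $\binom{x}{k}=0$ for negative integers $k$. Pochhammer symbol: $(a)_k=a(a+1)\cdots(a+k-1)$ for $k>0$, $(a)_0=1$; $1/(1)_k$ is interpreted as $0$ for negative integers $k$, so the sum defining $y_{i,j}$ runs over $i\le t\le j$. *)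

theory Defs
  imports Complex_Main
begin

text \<open>Entries b_{i,j}. The factor binom(j-1,p) vanishes unless 0 <= p <= j-1,
  so the sum over all integers p reduces to p = 0..j-1.\<close>
definition bmat :: "nat \<Rightarrow> 'a::field_char_0 \<Rightarrow> nat \<Rightarrow> nat \<Rightarrow> 'a" where
  "bmat n l i j = (\<Sum>p = 0..j - 1.
      (-1) ^ j * of_nat ((j - 1) choose p)
        * ((of_int (int p - int n + int j + int i - 2) - l) gchoose (2 * i - 1)))"

text \<open>Entries y_{i,j}. Since 1/(1)_k = 0 for negative k, the sum over all
  integers t reduces to i <= t <= j.  Here 3^(1-j) = 1/3^(j-1) as j >= 1.\<close>
definition ymat :: "nat \<Rightarrow> 'a::field_char_0 \<Rightarrow> nat \<Rightarrow> nat \<Rightarrow> 'a" where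
  "ymat n l i j = (\<Sum>t = i..j.
      2 * (-1) ^ (t + j) * pochhammer (of_nat j) j
        / (3 ^ (j - 1) * pochhammer 1 (j - t) * pochhammer 1 (t - i)
           * pochhammer (of_int (3 - int i + 2 * int n - 2 * int t) + 2 * l) i))"

end

theory Submission
  imports Defs "HOL-Computational_Algebra.Polynomial" "HOL-Computational_Algebra.Formal_Power_Series"
begin

text \<open>Polynomials in commuting shift operators \<open>X\<close> (acting on a first integer variable \<open>e\<close>)
  and \<open>Y\<close> (acting on a second one \<open>x\<close>) act as difference operators on functions of two
  integer variables. Written this way, the entries \<open>y\<^sub>k\<^sub>,\<^sub>j\<close> and \<open>b\<^sub>i\<^sub>,\<^sub>k\<close> are such operators applied
  to \<open>1/(c + e + 1)\<close> and to \<open>binom(b + x, 2i - 1)\<close>, where \<open>c = 2(n + l) + 2 - 3j\<close> and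
  \<open>b = i - n - l - 2\<close>, and the sum over \<open>k\<close> collapses, up to the
  factor \<open>2 (j)\<^sub>j / (3\<^sup>m m!)\<close> with \<open>m = j - 1\<close>, to the single operator
  \<open>K\<^sub>m = -Y (1 - X)\<^sup>m (X - Y)\<^sup>m (1 + X + Y)\<^sup>m\<close> applied to the product of the two functions.

  \<open>K\<^sub>m\<close> commutes, up to a shift, with the reflection \<open>(e, x) \<mapsto> (e, 3m + 2 - e - x)\<close>. As the
  binomial coefficient has odd degree \<open>2i - 1\<close>, reflecting and then applying Vandermonde's
  identity shows that twice the value is minus \<open>K\<^sub>m\<close> applied to a combination of products
  \<open>binom(c + e, q) binom(b + x, 2i - 2 - q)\<close>. Since \<open>(1 - X)\<^sup>m (X - Y)\<^sup>m\<close> kills every polynomial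
  of total degree below \<open>2m\<close>, this vanishes for \<open>i < j\<close>; for \<open>i = j\<close> only the top degree
  survives and a partial fraction identity gives \<open>1\<close>. The pole of \<open>1/(c + e + 1)\<close> does no harm:
  the hypothesis on the Pochhammer symbols puts it at \<open>e = 3m - 1\<close>, a shift absent from \<open>K\<^sub>m\<close>.\<close>

section \<open>Polynomials as shift operators\<close>

definition shift_op :: "'a::comm_ring_1 poly \<Rightarrow> (int \<Rightarrow> 'a) \<Rightarrow> int \<Rightarrow> 'a" where
  "shift_op p g y = (\<Sum>b\<le>degree p. coeff p b * g (y + int b))"

abbreviation pX :: "'a::comm_ring_1 poly" where "pX \<equiv> [:0, 1:]"

lemma shift_op_bound:
  assumes "degree p \<le> D"
  shows "shift_op p g y = (\<Sum>b\<le>D. coeff p b * g (y + int b))"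
  unfolding shift_op_def
  by (rule sum.mono_neutral_left) (use assms in \<open>auto simp: coeff_eq_0\<close>)

lemma shift_op_pCons: "shift_op (pCons a p) g y = a * g y + shift_op p g (y + 1)"
proof -
  have "shift_op (pCons a p) g y = (\<Sum>b\<le>Suc (degree p). coeff (pCons a p) b * g (y + int b))"
    by (rule shift_op_bound) (simp add: degree_pCons_le)
  also have "\<dots> = a * g y + (\<Sum>b\<le>degree p. coeff p b * g (y + 1 + int b))"
    by (subst sum.atMost_Suc_shift) (simp add: algebra_simps)
  finally show ?thesis by (simp add: shift_op_def)
qed

lemma shift_op_0 [simp]: "shift_op 0 g y = 0"
  by (simp add: shift_op_def)

lemma shift_op_const [simp]: "shift_op [:c:] g y = c * g y"
  by (simp add: shift_op_def)

lemma shift_op_one [simp]: "shift_op 1 g y = g y"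
  by (simp add: shift_op_def)

lemma shift_op_X [simp]: "shift_op pX g y = g (y + 1)"
  by (simp add: shift_op_pCons)

lemma shift_op_add: "shift_op (p + q) g y = shift_op p g y + shift_op q g y"
proof -
  let ?D = "max (degree p) (degree q)"
  have "shift_op (p + q) g y = (\<Sum>b\<le>?D. coeff (p + q) b * g (y + int b))"
    by (rule shift_op_bound) (simp add: degree_add_le)
  also have "\<dots> = (\<Sum>b\<le>?D. coeff p b * g (y + int b)) + (\<Sum>b\<le>?D. coeff q b * g (y + int b))"
    by (simp add: algebra_simps sum.distrib)
  also have "\<dots> = shift_op p g y + shift_op q g y"
    by (simp add: shift_op_bound[symmetric])
  finally show ?thesis .
qed

lemma shift_op_smult: "shift_op (smult c p) g y = c * shift_op p g y"
proof -
  have "shift_op (smult c p) g y = (\<Sum>b\<le>degree p. coeff (smult c p) b * g (y + int b))"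
    by (rule shift_op_bound) (simp add: degree_smult_le)
  thus ?thesis by (simp add: shift_op_def sum_distrib_left mult.assoc)
qed

lemma shift_op_mult: "shift_op (p * q) g y = shift_op p (shift_op q g) y"
proof (induction p arbitrary: y)
  case 0
  then show ?case by simp
next
  case (pCons a p)
  have "shift_op (pCons a p * q) g y = a * shift_op q g y + shift_op (p * q) g (y + 1)"
    by (simp add: shift_op_add shift_op_smult shift_op_pCons)
  also have "\<dots> = shift_op (pCons a p) (shift_op q g) y"
    by (simp add: shift_op_pCons pCons.IH)
  finally show ?case .
qed

lemma shift_op_X_power: "shift_op (pX ^ m) g y = g (y + int m)"
  by (induction m arbitrary: y) (simp_all add: shift_op_pCons algebra_simps)

lemma shift_op_of_nat: "shift_op (of_nat n) g y = of_nat n * g y"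
  by (simp add: of_nat_poly)

lemma shift_op_minus: "shift_op (- p) g y = - shift_op p g y"
  using shift_op_smult[of "-1" p g y] by simp

lemma shift_op_diff: "shift_op (p - q) g y = shift_op p g y - shift_op q g y"
  using shift_op_add[of p "- q" g y] shift_op_minus[of q g y] by simp

lemma shift_op_neg_one_power: "shift_op ((-1) ^ r) g y = (-1) ^ r * g y"
  by (induction r arbitrary: y) (simp_all add: shift_op_minus shift_op_mult)

lemma shift_op_sum: "shift_op (\<Sum>i\<in>S. P i) g y = (\<Sum>i\<in>S. shift_op (P i) g y)"
  by (induction S rule: infinite_finite_induct) (auto simp: shift_op_add)

lemma shift_op_fun_add: "shift_op p (\<lambda>y. g y + h y) y = shift_op p g y + shift_op p h y"
  by (simp add: shift_op_def algebra_simps sum.distrib)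

lemma shift_op_fun_cmult: "shift_op p (\<lambda>y. c * g y) y = c * shift_op p g y"
  by (simp add: shift_op_def sum_distrib_left algebra_simps)

lemma shift_op_fun_sum: "shift_op p (\<lambda>y. \<Sum>i\<in>S. G i y) y = (\<Sum>i\<in>S. shift_op p (G i) y)"
  by (simp add: shift_op_def sum_distrib_left sum.swap[of _ S])

lemma shift_op_fun_zero [simp]: "shift_op p (\<lambda>y. 0) y = 0"
  by (simp add: shift_op_def)

lemma shift_op_cong: "(\<And>z. g z = h z) \<Longrightarrow> shift_op p g y = shift_op p h y"
  by (simp add: shift_op_def)

text \<open>\<open>shift_op2 P F\<close> is \<open>P(X, Y) F\<close>, where the coefficients of \<open>P\<close> are polynomials in the shift
  \<open>X\<close> of the first argument and its variable is the shift \<open>Y\<close> of the second argument.\<close>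

definition shift_op2 :: "'a::comm_ring_1 poly poly \<Rightarrow> (int \<Rightarrow> int \<Rightarrow> 'a) \<Rightarrow> int \<Rightarrow> int \<Rightarrow> 'a" where
  "shift_op2 P F e x = (\<Sum>a\<le>degree P. shift_op (coeff P a) (\<lambda>e'. F e' (x + int a)) e)"

definition opX :: "'a::comm_ring_1 poly poly" where "opX = [:pX:]"

definition opY :: "'a::comm_ring_1 poly poly" where "opY = pX"

lemma shift_op2_bound:
  assumes "degree P \<le> D"
  shows "shift_op2 P F e x = (\<Sum>a\<le>D. shift_op (coeff P a) (\<lambda>e'. F e' (x + int a)) e)"
  unfolding shift_op2_def
  by (rule sum.mono_neutral_left) (use assms in \<open>auto simp: coeff_eq_0\<close>)

lemma shift_op2_pCons:
  "shift_op2 (pCons p P) F e x = shift_op p (\<lambda>e'. F e' x) e + shift_op2 P F e (x + 1)"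
proof -
  have "shift_op2 (pCons p P) F e x =
      (\<Sum>a\<le>Suc (degree P). shift_op (coeff (pCons p P) a) (\<lambda>e'. F e' (x + int a)) e)"
    by (rule shift_op2_bound) (simp add: degree_pCons_le)
  also have "\<dots> = shift_op p (\<lambda>e'. F e' x) e +
      (\<Sum>a\<le>degree P. shift_op (coeff P a) (\<lambda>e'. F e' (x + 1 + int a)) e)"
    by (subst sum.atMost_Suc_shift) (simp add: algebra_simps)
  finally show ?thesis by (simp add: shift_op2_def)
qed

lemma shift_op2_0 [simp]: "shift_op2 0 F e x = 0"
  by (simp add: shift_op2_def)

lemma shift_op2_const [simp]: "shift_op2 [:p:] F e x = shift_op p (\<lambda>e'. F e' x) e"
  by (simp add: shift_op2_pCons)

lemma shift_op2_one [simp]: "shift_op2 1 F e x = F e x"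
  by (simp add: one_pCons shift_op2_pCons)

lemma shift_op2_opX [simp]: "shift_op2 opX F e x = F (e + 1) x"
  by (simp add: opX_def)

lemma shift_op2_opY [simp]: "shift_op2 opY F e x = F e (x + 1)"
  by (simp add: opY_def shift_op2_pCons one_pCons)

lemma shift_op2_add: "shift_op2 (P + Q) F e x = shift_op2 P F e x + shift_op2 Q F e x"
proof -
  let ?D = "max (degree P) (degree Q)"
  have "shift_op2 (P + Q) F e x = (\<Sum>a\<le>?D. shift_op (coeff (P + Q) a) (\<lambda>e'. F e' (x + int a)) e)"
    by (rule shift_op2_bound) (simp add: degree_add_le)
  also have "\<dots> = (\<Sum>a\<le>?D. shift_op (coeff P a) (\<lambda>e'. F e' (x + int a)) e) +
      (\<Sum>a\<le>?D. shift_op (coeff Q a) (\<lambda>e'. F e' (x + int a)) e)"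
    by (simp add: shift_op_add sum.distrib)
  also have "\<dots> = shift_op2 P F e x + shift_op2 Q F e x"
    by (simp add: shift_op2_bound[symmetric])
  finally show ?thesis .
qed

lemma shift_op2_smult: "shift_op2 (smult p Q) F e x = shift_op p (\<lambda>e'. shift_op2 Q F e' x) e"
proof -
  have "shift_op2 (smult p Q) F e x =
      (\<Sum>a\<le>degree Q. shift_op (coeff (smult p Q) a) (\<lambda>e'. F e' (x + int a)) e)"
    by (rule shift_op2_bound) (simp add: degree_smult_le)
  also have "\<dots> = (\<Sum>a\<le>degree Q. shift_op p (shift_op (coeff Q a) (\<lambda>e'. F e' (x + int a))) e)"
    by (simp add: shift_op_mult)
  also have "\<dots> = shift_op p (\<lambda>e'. shift_op2 Q F e' x) e"
    by (simp add: shift_op2_def shift_op_fun_sum)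
  finally show ?thesis .
qed

lemma shift_op2_mult: "shift_op2 (P * Q) F e x = shift_op2 P (shift_op2 Q F) e x"
proof (induction P arbitrary: x)
  case 0
  then show ?case by simp
next
  case (pCons p P)
  have "shift_op2 (pCons p P * Q) F e x =
      shift_op p (\<lambda>e'. shift_op2 Q F e' x) e + shift_op2 (P * Q) F e (x + 1)"
    by (simp add: shift_op2_add shift_op2_smult shift_op2_pCons)
  also have "\<dots> = shift_op2 (pCons p P) (shift_op2 Q F) e x"
    by (simp add: shift_op2_pCons pCons.IH)
  finally show ?case .
qed

lemma shift_op2_const_const_mult: "shift_op2 ([:[:c:]:] * P) F e x = c * shift_op2 P F e x"
  by (simp add: shift_op2_smult shift_op_fun_cmult)

lemma shift_op2_minus: "shift_op2 (- P) F e x = - shift_op2 P F e x"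
proof -
  have "[:[:-1:]:] = (-1 :: 'a poly poly)"
    by (simp add: one_pCons)
  hence "- P = [:[:-1:]:] * P"
    by simp
  thus ?thesis by (simp only: shift_op2_const_const_mult) simp
qed

lemma shift_op2_diff: "shift_op2 (P - Q) F e x = shift_op2 P F e x - shift_op2 Q F e x"
  using shift_op2_add[of P "- Q" F e x] shift_op2_minus[of Q F e x] by simp

lemma shift_op2_sum: "shift_op2 (\<Sum>i\<in>S. P i) F e x = (\<Sum>i\<in>S. shift_op2 (P i) F e x)"
  by (induction S rule: infinite_finite_induct) (auto simp: shift_op2_add)

lemma shift_op2_fun_add:
  "shift_op2 P (\<lambda>e x. F e x + G e x) e x = shift_op2 P F e x + shift_op2 P G e x"
  by (simp add: shift_op2_def shift_op_fun_add sum.distrib)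

lemma shift_op2_fun_cmult: "shift_op2 P (\<lambda>e x. c * F e x) e x = c * shift_op2 P F e x"
  by (simp add: shift_op2_def shift_op_fun_cmult sum_distrib_left)

lemma shift_op2_fun_sum:
  "shift_op2 P (\<lambda>e x. \<Sum>i\<in>S. G i e x) e x = (\<Sum>i\<in>S. shift_op2 P (G i) e x)"
  by (simp add: shift_op2_def shift_op_fun_sum sum.swap[of _ S])

lemma shift_op2_fun_zero [simp]: "shift_op2 P (\<lambda>e x. 0) e x = 0"
  by (simp add: shift_op2_def)

lemma shift_op2_cong: "(\<And>e x. F e x = G e x) \<Longrightarrow> shift_op2 P F e x = shift_op2 P G e x"
  by (simp add: shift_op2_def)

definition acts_on_snd :: "'a::comm_ring_1 poly poly \<Rightarrow> 'a poly \<Rightarrow> bool" where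
  "acts_on_snd P q \<longleftrightarrow> (\<forall>g h e x. shift_op2 P (\<lambda>e x. g e * h x) e x = g e * shift_op q h x)"

lemma acts_on_snd_one: "acts_on_snd 1 1"
  by (simp add: acts_on_snd_def)

lemma acts_on_snd_opY: "acts_on_snd opY pX"
  by (simp add: acts_on_snd_def)

lemma acts_on_snd_add: "acts_on_snd P q \<Longrightarrow> acts_on_snd P' q' \<Longrightarrow> acts_on_snd (P + P') (q + q')"
  by (simp add: acts_on_snd_def shift_op2_add shift_op_add algebra_simps)

lemma acts_on_snd_diff: "acts_on_snd P q \<Longrightarrow> acts_on_snd P' q' \<Longrightarrow> acts_on_snd (P - P') (q - q')"
  by (simp add: acts_on_snd_def shift_op2_diff shift_op_diff algebra_simps)

lemma acts_on_snd_mult: "acts_on_snd P q \<Longrightarrow> acts_on_snd P' q' \<Longrightarrow> acts_on_snd (P * P') (q * q')"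
  by (simp add: acts_on_snd_def shift_op2_mult shift_op_mult cong: shift_op2_cong)

lemma acts_on_snd_power: "acts_on_snd P q \<Longrightarrow> acts_on_snd (P ^ m) (q ^ m)"
  by (induction m) (auto intro: acts_on_snd_mult acts_on_snd_one)

lemma shift_op2_tensor:
  assumes "acts_on_snd P q"
  shows "shift_op2 ([:p:] * P) (\<lambda>e x. g e * h x) e x = shift_op p g e * shift_op q h x"
proof -
  have "shift_op2 ([:p:] * P) (\<lambda>e x. g e * h x) e x =
      shift_op2 [:p:] (shift_op2 P (\<lambda>e x. g e * h x)) e x"
    by (rule shift_op2_mult)
  also have "\<dots> = shift_op2 [:p:] (\<lambda>e x. g e * shift_op q h x) e x"
    using assms by (intro shift_op2_cong) (simp add: acts_on_snd_def)
  also have "\<dots> = shift_op p g e * shift_op q h x"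
    by (simp add: shift_op_def sum_distrib_right algebra_simps)
  finally show ?thesis .
qed

text \<open>\<open>reflection_conj P P' D\<close>: conjugating \<open>P\<close> by the reflection \<open>(e, x) \<mapsto> (e, d - e - x)\<close>
  gives \<open>Y\<^sup>-\<^sup>D P'\<close>, i.e. \<open>P' = Y\<^sup>D P(X Y\<^sup>-\<^sup>1, Y\<^sup>-\<^sup>1)\<close>.\<close>

definition reflection_conj :: "'a::comm_ring_1 poly poly \<Rightarrow> 'a poly poly \<Rightarrow> nat \<Rightarrow> bool" where
  "reflection_conj P P' D \<longleftrightarrow>
    (\<forall>G d e x. shift_op2 P (\<lambda>e x. G e (d - e - x)) e x = shift_op2 P' G e (d - int D - e - x))"

lemma reflection_conj_linear: "reflection_conj [:[:a, b:], [:c:]:] [:[:c, b:], [:a:]:] 1"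
  unfolding reflection_conj_def
  by (simp add: shift_op2_pCons shift_op_pCons algebra_simps)

lemma reflection_conj_one: "reflection_conj 1 1 0"
  by (simp add: reflection_conj_def)

lemma reflection_conj_mult:
  assumes "reflection_conj P P' D" "reflection_conj Q Q' E"
  shows "reflection_conj (P * Q) (P' * Q') (D + E)"
  unfolding reflection_conj_def
proof (intro allI)
  fix G d e x
  have "shift_op2 (P * Q) (\<lambda>e x. G e (d - e - x)) e x =
      shift_op2 P (\<lambda>e x. shift_op2 Q' G e ((d - int E) - e - x)) e x"
    using assms(2) unfolding reflection_conj_def by (simp add: shift_op2_mult cong: shift_op2_cong)
  also have "\<dots> = shift_op2 P' (shift_op2 Q' G) e ((d - int E) - int D - e - x)"
    using assms(1) unfolding reflection_conj_def by simp
  also have "\<dots> = shift_op2 (P' * Q') G e (d - int (D + E) - e - x)"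
    by (simp add: shift_op2_mult algebra_simps)
  finally show "shift_op2 (P * Q) (\<lambda>e x. G e (d - e - x)) e x =
      shift_op2 (P' * Q') G e (d - int (D + E) - e - x)" .
qed

lemma reflection_conj_power: "reflection_conj P P' D \<Longrightarrow> reflection_conj (P ^ m) (P' ^ m) (m * D)"
  by (induction m) (simp_all add: reflection_conj_one reflection_conj_mult)

section \<open>The kernel operator\<close>

definition kernel_op :: "nat \<Rightarrow> 'a::comm_ring_1 poly poly" where
  "kernel_op m = - opY * (1 - opX) ^ m * (opX - opY) ^ m * (1 + opX + opY) ^ m"

definition reflected_kernel_op :: "nat \<Rightarrow> 'a::comm_ring_1 poly poly" where
  "reflected_kernel_op m = - ((opY - opX) ^ m * (opX - 1) ^ m * (1 + opX + opY) ^ m)"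

lemma opX_opY_linear_forms:
  "- opY = ([:[:0, 0:], [:-1:]:] :: 'a::comm_ring_1 poly poly)"
  "- 1 = ([:[:-1, 0:], [:0:]:] :: 'a::comm_ring_1 poly poly)"
  "1 - opX = ([:[:1, -1:], [:0:]:] :: 'a::comm_ring_1 poly poly)"
  "opY - opX = ([:[:0, -1:], [:1:]:] :: 'a::comm_ring_1 poly poly)"
  "opX - opY = ([:[:0, 1:], [:-1:]:] :: 'a::comm_ring_1 poly poly)"
  "opX - 1 = ([:[:-1, 1:], [:0:]:] :: 'a::comm_ring_1 poly poly)"
  "1 + opX + opY = ([:[:1, 1:], [:1:]:] :: 'a::comm_ring_1 poly poly)"
  by (simp_all add: opX_def opY_def one_pCons)

lemma reflection_conj_kernel_op: "reflection_conj (kernel_op m) (reflected_kernel_op m) (1 + 3 * m)"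
proof -
  have "reflection_conj (- opY) (- 1 :: 'a poly poly) 1"
    unfolding opX_opY_linear_forms by (rule reflection_conj_linear)
  moreover have "reflection_conj ((1 - opX) ^ m) ((opY - opX) ^ m :: 'a poly poly) m"
    using reflection_conj_power[OF reflection_conj_linear[of 1 "-1" 0], of m]
    unfolding opX_opY_linear_forms by simp
  moreover have "reflection_conj ((opX - opY) ^ m) ((opX - 1) ^ m :: 'a poly poly) m"
    using reflection_conj_power[OF reflection_conj_linear[of 0 1 "-1"], of m]
    unfolding opX_opY_linear_forms by simp
  moreover have "reflection_conj ((1 + opX + opY) ^ m) ((1 + opX + opY) ^ m :: 'a poly poly) m"
    using reflection_conj_power[OF reflection_conj_linear[of 1 1 1], of m]
    unfolding opX_opY_linear_forms by simp
  ultimately have K: "reflection_conj (- opY * (1 - opX) ^ m * (opX - opY) ^ m * (1 + opX + opY) ^ m)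
      (- 1 * (opY - opX) ^ m * (opX - 1) ^ m * (1 + opX + opY) ^ m :: 'a poly poly) (1 + m + m + m)"
    by (intro reflection_conj_mult)
  have "1 + m + m + m = 1 + 3 * m"
    by simp
  with K show ?thesis
    unfolding kernel_op_def reflected_kernel_op_def by (simp only:) (simp add: algebra_simps)
qed

lemma kernel_op_eq_opY_mult: "kernel_op m = opY * reflected_kernel_op m"
proof -
  have "(1 - opX) * (opX - opY) = (opY - opX) * ((opX :: 'a poly poly) - 1)"
    by (simp add: algebra_simps)
  hence "(1 - opX) ^ m * (opX - opY) ^ m = (opY - opX) ^ m * ((opX :: 'a poly poly) - 1) ^ m"
    by (metis power_mult_distrib)
  thus ?thesis unfolding kernel_op_def reflected_kernel_op_def by (simp add: algebra_simps)
qed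

lemma shift_op2_kernel_op_reflect:
  "shift_op2 (kernel_op m) (\<lambda>e x. G e (int (3 * m + 2) - e - x)) 0 0 = shift_op2 (kernel_op m) G 0 0"
proof -
  have "shift_op2 (kernel_op m) (\<lambda>e x. G e (int (3 * m + 2) - e - x)) 0 0 =
      shift_op2 (reflected_kernel_op m) G 0 (int (3 * m + 2) - int (1 + 3 * m) - 0 - 0)"
    using reflection_conj_kernel_op[of m] unfolding reflection_conj_def by blast
  also have "\<dots> = shift_op2 (kernel_op m) G 0 0"
    by (simp add: kernel_op_eq_opY_mult shift_op2_mult)
  finally show ?thesis .
qed

lemma const_poly_mult: "[:p * q:] = [:p:] * [:q:]"
  by (rule mult_to_poly[symmetric])

lemma const_poly_power: "[:p ^ n:] = [:p:] ^ n"
  by (induction n) (simp_all add: one_pCons const_poly_mult)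

lemma const_poly_add: "[:p + q:] = [:p:] + [:q:]"
  by simp

lemma const_poly_diff: "[:p - q:] = [:p:] - ([:q:] :: 'a::comm_ring_1 poly)"
  by simp

lemma const_const_poly_neg_one_power: "[:[:(-1) ^ k:]:] = ((-1) ^ k :: 'a::comm_ring_1 poly poly)"
proof -
  have "[:[:(-1::'a) ^ k:]:] = [:[:-1:]:] ^ k"
    by (simp add: const_poly_power)
  also have "[:[:-1::'a:]:] = (-1 :: 'a poly poly)"
    by (simp add: one_pCons)
  finally show ?thesis .
qed

lemma const_const_poly_of_nat: "[:[:of_nat n:]:] = (of_nat n :: 'a::comm_ring_1 poly poly)"
  by (simp add: of_nat_poly)

definition kernel_fst_factor :: "nat \<Rightarrow> nat \<Rightarrow> 'a::comm_ring_1 poly" where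
  "kernel_fst_factor m k = (1 - pX) ^ m * pX ^ (m - k) * (1 + pX) ^ (m - k)"

definition kernel_snd_factor :: "nat \<Rightarrow> 'a::comm_ring_1 poly" where
  "kernel_snd_factor k = pX ^ (k + 1) * (1 + pX) ^ k"

text \<open>Since \<open>(X - Y)(1 + X + Y) = (X + X\<^sup>2) - (Y + Y\<^sup>2)\<close>, the binomial expansion of its
  \<open>m\<close>-th power separates the two variables.\<close>

lemma kernel_op_expand:
  "kernel_op m = (\<Sum>k\<le>m. [:[:of_nat (m choose k) * (-1) ^ (k + 1):]:] *
      ([:kernel_fst_factor m k:] * (opY ^ (k + 1) * (1 + opY) ^ k)))"
proof -
  let ?WX = "opX + opX ^ 2 :: 'a poly poly" and ?WY = "opY + opY ^ 2 :: 'a poly poly"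
  have w: "(opX - opY) * (1 + opX + opY) = (- ?WY) + ?WX"
    by (simp add: algebra_simps power2_eq_square)
  have "kernel_op m = - opY * (1 - opX) ^ m * ((opX - opY) * (1 + opX + opY)) ^ m"
    by (simp add: kernel_op_def power_mult_distrib mult.assoc)
  also have "\<dots> = (\<Sum>k\<le>m. - opY * (1 - opX) ^ m * (of_nat (m choose k) * (- ?WY) ^ k * ?WX ^ (m - k)))"
    by (simp only: w binomial_ring sum_distrib_left)
  also have "\<dots> = (\<Sum>k\<le>m. [:[:of_nat (m choose k) * (-1) ^ (k + 1):]:] *
      ([:kernel_fst_factor m k:] * (opY ^ (k + 1) * (1 + opY) ^ k)))"
  proof (rule sum.cong[OF refl])
    fix k
    have c: "[:[:of_nat (m choose k) * (-1) ^ (k + 1):]:] =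
        (of_nat (m choose k) * (-1) ^ (k + 1) :: 'a poly poly)"
      by (simp only: const_poly_mult const_const_poly_of_nat const_const_poly_neg_one_power)
    have fst: "[:kernel_fst_factor m k:] = (1 - opX) ^ m * opX ^ (m - k) * (1 + opX) ^ (m - k)"
      by (simp add: kernel_fst_factor_def const_poly_mult const_poly_power const_poly_diff
          const_poly_add pCons_one opX_def)
    have "(- ?WY) ^ k = (-1) ^ k * opY ^ k * (1 + opY) ^ k"
      and "?WX ^ (m - k) = opX ^ (m - k) * (1 + opX) ^ (m - k)"
      by (simp_all add: power_mult_distrib[symmetric] power2_eq_square algebra_simps)
    then show "- opY * (1 - opX) ^ m * (of_nat (m choose k) * (- ?WY) ^ k * ?WX ^ (m - k)) =
        [:[:of_nat (m choose k) * (-1) ^ (k + 1):]:] *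
        ([:kernel_fst_factor m k:] * (opY ^ (k + 1) * (1 + opY) ^ k))"
      unfolding c fst by (simp add: algebra_simps)
  qed
  finally show ?thesis .
qed

lemma shift_op2_kernel_op_tensor:
  "shift_op2 (kernel_op m) (\<lambda>e x. g e * h x) e x =
     (\<Sum>k\<le>m. of_nat (m choose k) * (-1) ^ (k + 1) *
        (shift_op (kernel_fst_factor m k) g e * shift_op (kernel_snd_factor k) h x))"
proof -
  have snd: "acts_on_snd (opY ^ (k + 1) * (1 + opY) ^ k) (kernel_snd_factor k)" for k
    unfolding kernel_snd_factor_def
    by (intro acts_on_snd_mult acts_on_snd_power acts_on_snd_add acts_on_snd_one acts_on_snd_opY)
  show ?thesis
    unfolding kernel_op_expand shift_op2_sum
    by (intro sum.cong refl) (simp only: shift_op2_const_const_mult shift_op2_tensor[OF snd] mult.assoc)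
qed

lemma shift_op_diff_power_gbinomial:
  "shift_op ((pX - 1) ^ p) (\<lambda>e. (c + of_int e) gchoose q) e =
     (if p \<le> q then (c + of_int e) gchoose (q - p) else (0::'a::field_char_0))"
proof (induction p arbitrary: e)
  case 0
  then show ?case by simp
next
  case (Suc p)
  have "shift_op ((pX - 1) ^ Suc p) (\<lambda>e. (c + of_int e) gchoose q) e =
      shift_op (pX - 1) (\<lambda>e. if p \<le> q then (c + of_int e) gchoose (q - p) else 0) e"
    unfolding power_Suc shift_op_mult by (intro shift_op_cong) (rule Suc.IH)
  also have "\<dots> = (if Suc p \<le> q then (c + of_int e) gchoose (q - Suc p) else 0)"
  proof (cases "Suc p \<le> q")
    case True
    then obtain r where r: "q - p = Suc r" "q - Suc p = r"
      by (metis Suc_diff_Suc Suc_le_lessD)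
    have "(c + of_int (e + 1)) gchoose (Suc r) = ((c + of_int e) + 1) gchoose (Suc r)"
      by (simp add: algebra_simps)
    also have "\<dots> = ((c + of_int e) gchoose r) + ((c + of_int e) gchoose (Suc r))"
      by (rule gbinomial_Suc_Suc)
    finally show ?thesis using True r by (simp add: shift_op_diff)
  next
    case False
    then show ?thesis by (cases "p = q") (simp_all add: shift_op_diff)
  qed
  finally show ?case .
qed

lemma one_minus_X_power: "(1 - pX) ^ m = smult ((-1) ^ m) ((pX - 1) ^ m :: 'a::comm_ring_1 poly)"
proof -
  have "(1 - pX) ^ m = ((-1) * (pX - 1) :: 'a poly) ^ m"
    by simp
  also have "\<dots> = smult ((-1) ^ m) ((pX - 1) ^ m)"
    by (simp add: power_mult_distrib smult_power[symmetric])
  finally show ?thesis .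
qed

lemma kernel_op_split: "kernel_op m = (- opY * (1 + opX + opY) ^ m) * ((1 - opX) ^ m * (opX - opY) ^ m)"
  by (simp add: kernel_op_def algebra_simps)

lemma shift_op2_difference_core_tensor:
  "shift_op2 ((1 - opX) ^ m * (opX - opY) ^ m) (\<lambda>e x. g e * h x) e x =
    (\<Sum>s\<le>m. of_nat (m choose s) *
      (shift_op ((1 - pX) ^ m * (pX - 1) ^ s) g e * shift_op ((1 - pX) ^ (m - s)) h x))"
proof -
  have "(opX - opY) ^ m = ((opX - 1) + (1 - opY) :: 'a poly poly) ^ m"
    by simp
  also have "\<dots> = (\<Sum>s\<le>m. of_nat (m choose s) * (opX - 1) ^ s * (1 - opY) ^ (m - s))"
    by (rule binomial_ring)
  finally have "(1 - opX) ^ m * (opX - opY) ^ m =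
      (\<Sum>s\<le>m. (1 - opX) ^ m * (of_nat (m choose s) * (opX - 1) ^ s * (1 - opY) ^ (m - s)) :: 'a poly poly)"
    by (simp add: sum_distrib_left)
  also have "\<dots> = (\<Sum>s\<le>m. [:[:of_nat (m choose s):]:] *
      ([:(1 - pX) ^ m * (pX - 1) ^ s:] * (1 - opY) ^ (m - s)))"
    by (intro sum.cong refl)
      (simp only: const_poly_mult const_poly_power const_poly_diff pCons_one opX_def
        const_const_poly_of_nat mult_ac)
  finally have eq: "(1 - opX) ^ m * (opX - opY) ^ m = (\<Sum>s\<le>m. [:[:of_nat (m choose s):]:] *
      ([:(1 - pX) ^ m * (pX - 1) ^ s:] * (1 - opY) ^ (m - s)) :: 'a poly poly)" .
  have snd: "acts_on_snd ((1 - opY) ^ (m - s)) ((1 - pX) ^ (m - s))" for s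
    by (intro acts_on_snd_power acts_on_snd_diff acts_on_snd_one acts_on_snd_opY)
  show ?thesis
    unfolding eq shift_op2_sum
    by (intro sum.cong refl) (simp only: shift_op2_const_const_mult shift_op2_tensor[OF snd])
qed

lemma shift_op2_difference_core_gbinomial:
  fixes c b :: "'a::field_char_0"
  shows "shift_op2 ((1 - opX) ^ m * (opX - opY) ^ m)
      (\<lambda>e x. ((c + of_int e) gchoose q1) * ((b + of_int x) gchoose q2)) e x =
    (\<Sum>s\<le>m. (-1) ^ s * of_nat (m choose s) *
       ((if m + s \<le> q1 then (c + of_int e) gchoose (q1 - (m + s)) else 0) *
        (if m - s \<le> q2 then (b + of_int x) gchoose (q2 - (m - s)) else 0)))"
  unfolding shift_op2_difference_core_tensor
proof (intro sum.cong refl)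
  fix s assume "s \<in> {..m}"
  then have "m + (m - s) = s + 2 * (m - s)"
    by simp
  then have "(-1::'a) ^ m * (-1) ^ (m - s) = (-1) ^ (s + 2 * (m - s))"
    by (metis power_add)
  then have sign: "(-1::'a) ^ m * (-1) ^ (m - s) = (-1) ^ s"
    by (simp add: power_add power_mult)
  have "shift_op ((1 - pX) ^ m * (pX - 1) ^ s) (\<lambda>e. (c + of_int e) gchoose q1) e =
      (-1) ^ m * (if m + s \<le> q1 then (c + of_int e) gchoose (q1 - (m + s)) else 0)"
    by (simp only: one_minus_X_power mult_smult_left shift_op_smult power_add[symmetric]
        shift_op_diff_power_gbinomial)
  moreover have "shift_op ((1 - pX) ^ (m - s)) (\<lambda>x. (b + of_int x) gchoose q2) x =
      (-1) ^ (m - s) * (if m - s \<le> q2 then (b + of_int x) gchoose (q2 - (m - s)) else 0)"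
    by (simp only: one_minus_X_power shift_op_smult shift_op_diff_power_gbinomial)
  ultimately show "of_nat (m choose s) * (shift_op ((1 - pX) ^ m * (pX - 1) ^ s)
      (\<lambda>e. (c + of_int e) gchoose q1) e * shift_op ((1 - pX) ^ (m - s)) (\<lambda>x. (b + of_int x) gchoose q2) x) =
    (-1) ^ s * of_nat (m choose s) *
       ((if m + s \<le> q1 then (c + of_int e) gchoose (q1 - (m + s)) else 0) *
        (if m - s \<le> q2 then (b + of_int x) gchoose (q2 - (m - s)) else 0))"
    by (simp only: sign[symmetric] mult_ac)
qed

lemma shift_op2_trinomial_power_const:
  "shift_op2 ((1 + opX + opY) ^ m) (\<lambda>e x. c) e x = 3 ^ m * (c::'a::comm_ring_1)"
proof (induction m arbitrary: c e x)
  case 0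
  then show ?case by simp
next
  case (Suc m)
  have "shift_op2 ((1 + opX + opY) ^ Suc m) (\<lambda>e x. c) e x =
      shift_op2 (1 + opX + opY) (\<lambda>e x. 3 ^ m * c) e x"
    unfolding power_Suc shift_op2_mult by (intro shift_op2_cong) (rule Suc.IH)
  also have "\<dots> = 3 ^ Suc m * c"
    by (simp add: shift_op2_add algebra_simps)
  finally show ?case .
qed

lemma shift_op2_kernel_op_gbinomial_low:
  fixes c b :: "'a::field_char_0"
  assumes "q1 + q2 < 2 * m"
  shows "shift_op2 (kernel_op m) (\<lambda>e x. ((c + of_int e) gchoose q1) * ((b + of_int x) gchoose q2)) 0 0 = 0"
proof -
  have "shift_op2 ((1 - opX) ^ m * (opX - opY) ^ m)
      (\<lambda>e x. ((c + of_int e) gchoose q1) * ((b + of_int x) gchoose q2)) e x = 0" for e x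
    unfolding shift_op2_difference_core_gbinomial using assms by (intro sum.neutral) auto
  then have "shift_op2 (kernel_op m) (\<lambda>e x. ((c + of_int e) gchoose q1) * ((b + of_int x) gchoose q2)) 0 0 =
      shift_op2 (- opY * (1 + opX + opY) ^ m) (\<lambda>e x. 0) 0 0"
    unfolding kernel_op_split shift_op2_mult[of "- opY * (1 + opX + opY) ^ m"]
    by (intro shift_op2_cong)
  then show ?thesis
    by simp
qed

lemma shift_op2_kernel_op_gbinomial_top:
  fixes c b :: "'a::field_char_0"
  assumes "q1 + q2 = 2 * m"
  shows "shift_op2 (kernel_op m) (\<lambda>e x. ((c + of_int e) gchoose q1) * ((b + of_int x) gchoose q2)) 0 0 =
    - (3 ^ m * (if m \<le> q1 then (-1) ^ (q1 - m) * of_nat (m choose (q1 - m)) else 0))"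
proof -
  let ?v = "(if m \<le> q1 then (-1) ^ (q1 - m) * of_nat (m choose (q1 - m)) else 0) :: 'a"
  have "shift_op2 ((1 - opX) ^ m * (opX - opY) ^ m)
      (\<lambda>e x. ((c + of_int e) gchoose q1) * ((b + of_int x) gchoose q2)) e x =
      (\<Sum>s\<le>m. if s = q1 - m \<and> m \<le> q1 then (-1) ^ (q1 - m) * of_nat (m choose (q1 - m)) else 0)" for e x
    unfolding shift_op2_difference_core_gbinomial using assms
    by (intro sum.cong refl) auto
  also have "\<dots> = ?v"
    using assms by (auto simp: sum.delta')
  finally have core: "shift_op2 ((1 - opX) ^ m * (opX - opY) ^ m)
      (\<lambda>e x. ((c + of_int e) gchoose q1) * ((b + of_int x) gchoose q2)) e x = ?v" for e x .
  have "shift_op2 (kernel_op m) (\<lambda>e x. ((c + of_int e) gchoose q1) * ((b + of_int x) gchoose q2)) 0 0 =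
      shift_op2 (- opY * (1 + opX + opY) ^ m) (\<lambda>e x. ?v) 0 0"
    unfolding kernel_op_split shift_op2_mult[of "- opY * (1 + opX + opY) ^ m"] core ..
  also have "\<dots> = - (3 ^ m * ?v)"
    by (simp only: shift_op2_minus shift_op2_mult shift_op2_opY shift_op2_trinomial_power_const)
  finally show ?thesis by simp
qed

section \<open>Partial fractions\<close>

lemma sum_alternating_binomial_div_Suc:
  fixes z :: "'a::field_char_0"
  shows "(\<Sum>r\<le>Suc n. (-1) ^ r * of_nat (Suc n choose r) / (z + of_nat r)) =
    (\<Sum>r\<le>n. (-1) ^ r * of_nat (n choose r) / (z + of_nat r)) -
    (\<Sum>r\<le>n. (-1) ^ r * of_nat (n choose r) / (z + 1 + of_nat r))"
proof -
  have "(\<Sum>r\<le>n. (-1) ^ r * of_nat (n choose r) / (z + of_nat r)) =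
      (\<Sum>r\<le>Suc n. (-1) ^ r * of_nat (n choose r) / (z + of_nat r))"
    by simp
  also have "\<dots> = 1 / z + (\<Sum>r\<le>n. (-1) ^ Suc r * of_nat (n choose Suc r) / (z + 1 + of_nat r))"
    by (subst sum.atMost_Suc_shift) (simp add: algebra_simps)
  finally have shift: "(\<Sum>r\<le>n. (-1) ^ r * of_nat (n choose r) / (z + of_nat r)) =
      1 / z + (\<Sum>r\<le>n. (-1) ^ Suc r * of_nat (n choose Suc r) / (z + 1 + of_nat r))" .
  have "(\<Sum>r\<le>Suc n. (-1) ^ r * of_nat (Suc n choose r) / (z + of_nat r)) =
      1 / z + (\<Sum>r\<le>n. (-1) ^ Suc r * of_nat (Suc n choose Suc r) / (z + of_nat (Suc r)))"
    by (subst sum.atMost_Suc_shift) simp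
  also have "\<dots> = 1 / z + (\<Sum>r\<le>n. (-1) ^ Suc r * of_nat (n choose Suc r) / (z + 1 + of_nat r)) -
      (\<Sum>r\<le>n. (-1) ^ r * of_nat (n choose r) / (z + 1 + of_nat r))"
    by (simp add: sum_subtractf[symmetric] sum.distrib[symmetric] algebra_simps add_divide_distrib
        diff_divide_distrib)
  finally show ?thesis
    unfolding shift .
qed

lemma sum_alternating_binomial_div:
  fixes z :: "'a::field_char_0"
  assumes "pochhammer z (Suc n) \<noteq> 0"
  shows "(\<Sum>r\<le>n. (-1) ^ r * of_nat (n choose r) / (z + of_nat r)) = fact n / pochhammer z (Suc n)"
  using assms
proof (induction n arbitrary: z)
  case 0
  then show ?case by simp
next
  case (Suc n)
  have p1: "pochhammer z (Suc (Suc n)) = pochhammer z (Suc n) * (z + of_nat (Suc n))"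
    by (rule pochhammer_Suc)
  have p2: "pochhammer z (Suc (Suc n)) = z * pochhammer (z + 1) (Suc n)"
    by (rule pochhammer_rec)
  have "pochhammer z (Suc n) * (z + of_nat (Suc n)) \<noteq> 0" "z * pochhammer (z + 1) (Suc n) \<noteq> 0"
    using Suc.prems by (metis p1, metis p2)
  then have nz: "pochhammer z (Suc n) \<noteq> 0" "z + of_nat (Suc n) \<noteq> 0"
    "z \<noteq> 0" "pochhammer (z + 1) (Suc n) \<noteq> 0"
    by auto
  have "(\<Sum>r\<le>Suc n. (-1) ^ r * of_nat (Suc n choose r) / (z + of_nat r)) =
      fact n / pochhammer z (Suc n) - fact n / pochhammer (z + 1) (Suc n)"
    unfolding sum_alternating_binomial_div_Suc using Suc.IH[of z] Suc.IH[of "z + 1"] nz by simp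
  also have "\<dots> = (fact n * (z + of_nat (Suc n)) - fact n * z) / pochhammer z (Suc (Suc n))"
  proof -
    have "fact n / pochhammer z (Suc n) = fact n * (z + of_nat (Suc n)) / pochhammer z (Suc (Suc n))"
      unfolding p1 using nz by simp
    moreover have "fact n / pochhammer (z + 1) (Suc n) = fact n * z / pochhammer z (Suc (Suc n))"
      unfolding p2 using nz by simp
    ultimately show ?thesis
      by (simp only: diff_divide_distrib)
  qed
  also have "\<dots> = fact (Suc n) / pochhammer z (Suc (Suc n))"
    by (simp add: algebra_simps)
  finally show ?case .
qed

lemma pochhammer_of_nat_neq_0: "0 < j \<Longrightarrow> pochhammer (of_nat j :: 'a::field_char_0) k \<noteq> 0"
  unfolding pochhammer_of_nat of_nat_eq_0_iff using pochhammer_pos by blast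

lemma shift_op2_kernel_op_gbinomial_sum:
  fixes c b :: "'a::field_char_0"
  assumes "M \<le> 2 * m + 1"
  shows "(\<Sum>q<M. 1 / of_nat (q + 1) *
      shift_op2 (kernel_op m) (\<lambda>e x. ((c + of_int e) gchoose q) * ((b + of_int x) gchoose (M - 1 - q))) 0 0) =
    (if M = 2 * m + 1 then - (3 ^ m * fact m / pochhammer (of_nat (m + 1)) (Suc m)) else 0)"
proof (cases "M = 2 * m + 1")
  case False
  have "shift_op2 (kernel_op m)
      (\<lambda>e x. ((c + of_int e) gchoose q) * ((b + of_int x) gchoose (M - 1 - q))) 0 0 = 0"
    if "q < M" for q
    by (rule shift_op2_kernel_op_gbinomial_low) (use False assms that in auto)
  with False show ?thesis
    by simp
next
  case True
  let ?t = "\<lambda>s. 1 / of_nat (s + m + 1) * - (3 ^ m * ((-1) ^ s * of_nat (m choose s))) :: 'a"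
  have "(\<Sum>q<M. 1 / of_nat (q + 1) *
      shift_op2 (kernel_op m) (\<lambda>e x. ((c + of_int e) gchoose q) * ((b + of_int x) gchoose (M - 1 - q))) 0 0) =
      (\<Sum>q<2 * m + 1. if m \<le> q then ?t (q - m) else 0)"
    unfolding True
    by (intro sum.cong refl) (simp add: shift_op2_kernel_op_gbinomial_top)
  also have "\<dots> = (\<Sum>q\<in>{m..2 * m}. ?t (q - m))"
    by (rule sum.mono_neutral_cong_right) auto
  also have "\<dots> = (\<Sum>s\<le>m. ?t s)"
    by (rule sum.reindex_bij_witness[where i="\<lambda>s. s + m" and j="\<lambda>q. q - m"]) auto
  also have "\<dots> = - (3 ^ m * (\<Sum>s\<le>m. (-1) ^ s * of_nat (m choose s) / (of_nat (m + 1) + of_nat s)))"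
    by (simp add: sum_distrib_left sum_negf[symmetric] algebra_simps)
  also have "\<dots> = - (3 ^ m * fact m / pochhammer (of_nat (m + 1)) (Suc m))"
    using sum_alternating_binomial_div[OF pochhammer_of_nat_neq_0[of "m + 1" "Suc m", where 'a='a]]
    by simp
  finally show ?thesis
    using True by simp
qed

section \<open>The matrix entries as shift operators\<close>

lemma power_one_minus_eq_sum:
  "(1 - x :: 'b::comm_ring_1) ^ q = (\<Sum>r\<le>q. of_nat (q choose r) * ((-1) ^ r * x ^ r))"
proof -
  have "(1 - x) ^ q = (- x + 1) ^ q"
    by simp
  also have "\<dots> = (\<Sum>r\<le>q. of_nat (q choose r) * (- x) ^ r * 1 ^ (q - r))"
    by (rule binomial_ring)
  finally show ?thesis
    by (simp only: power_one mult_1_right power_minus[of x] mult.assoc)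
qed

lemma power_one_plus_eq_sum: "(1 + x :: 'b::comm_ring_1) ^ q = (\<Sum>r\<le>q. of_nat (q choose r) * x ^ r)"
  using binomial_ring[of x 1 q] by (simp add: add.commute)

lemma shift_op_one_minus_X_power:
  "shift_op ((1 - pX) ^ q) g y = (\<Sum>r\<le>q. (-1) ^ r * of_nat (q choose r) * g (y + int r))"
  unfolding power_one_minus_eq_sum shift_op_sum
  by (intro sum.cong refl)
    (simp only: shift_op_mult shift_op_of_nat shift_op_neg_one_power shift_op_X_power mult_ac)

lemma shift_op_one_minus_X2_power:
  "shift_op ((1 - pX ^ 2) ^ q) g y = (\<Sum>s\<le>q. (-1) ^ s * of_nat (q choose s) * g (y + int (2 * s)))"
  unfolding power_one_minus_eq_sum[of "pX ^ 2"] shift_op_sum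
  by (intro sum.cong refl)
    (simp only: shift_op_mult shift_op_of_nat shift_op_neg_one_power power_mult[symmetric]
      shift_op_X_power mult_ac)

lemma kernel_fst_factor_alt:
  assumes "k \<le> m"
  shows "kernel_fst_factor m k = pX ^ (m - k) * ((1 - pX ^ 2) ^ (m - k) * (1 - pX) ^ k)"
proof -
  have "(1 - x) ^ m * x ^ (m - k) * (1 + x) ^ (m - k) = x ^ (m - k) * ((1 - x ^ 2) ^ (m - k) * (1 - x) ^ k)"
    for x :: "'a poly"
  proof -
    have "m = (m - k) + k"
      using assms by simp
    then have split: "(1 - x) ^ m = (1 - x) ^ (m - k) * (1 - x) ^ k"
      by (metis power_add)
    have "(1 - x) * (1 + x) = 1 - x ^ 2"
      by (simp add: power2_eq_square algebra_simps)
    then have square: "(1 - x) ^ (m - k) * (1 + x) ^ (m - k) = (1 - x ^ 2) ^ (m - k)"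
      by (simp only: power_mult_distrib[symmetric])
    show ?thesis
      by (simp only: split square[symmetric] mult_ac)
  qed
  then show ?thesis
    unfolding kernel_fst_factor_def .
qed

lemma shift_op_kernel_fst_factor:
  assumes "k \<le> m"
  shows "shift_op (kernel_fst_factor m k) g y = (\<Sum>s\<le>m - k. (-1) ^ s * of_nat ((m - k) choose s) *
      (\<Sum>r\<le>k. (-1) ^ r * of_nat (k choose r) * g (y + int (m - k + 2 * s + r))))"
  unfolding kernel_fst_factor_alt[OF assms] shift_op_mult shift_op_X_power shift_op_one_minus_X2_power
    shift_op_one_minus_X_power
  by (simp add: sum_distrib_left algebra_simps)

lemma shift_op_kernel_snd_factor:
  "shift_op (kernel_snd_factor k) g y = (\<Sum>p\<le>k. of_nat (k choose p) * g (y + int (k + 1 + p)))"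
  unfolding kernel_snd_factor_def shift_op_mult shift_op_X_power power_one_plus_eq_sum shift_op_sum
  by (intro sum.cong refl) (simp add: shift_op_mult shift_op_of_nat shift_op_X_power algebra_simps)

definition recip_fun :: "nat \<Rightarrow> 'a::field_char_0 \<Rightarrow> nat \<Rightarrow> int \<Rightarrow> 'a" where
  "recip_fun n l j e = 1 / (2 * (of_nat n + l) + 2 - 3 * of_nat j + of_int e + 1)"

definition binom_fun :: "nat \<Rightarrow> 'a::field_char_0 \<Rightarrow> nat \<Rightarrow> int \<Rightarrow> 'a" where
  "binom_fun n l i x = (of_nat i - of_nat n - l - 2 + of_int x) gchoose (2 * i - 1)"

text \<open>The factor \<open>1 / (z)\<^sub>k\<close> of a summand of \<open>y\<^sub>k\<^sub>,\<^sub>j\<close> is expanded into partial fractions.\<close>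

lemma ymat_summand_eq:
  fixes l :: "'a::field_char_0"
  assumes k: "1 \<le> k" "k \<le> t" "t \<le> j"
    and nz: "pochhammer (of_int (3 - int k + 2 * int n - 2 * int t) + 2 * l) k \<noteq> 0"
  shows "2 * (-1) ^ (t + j) * pochhammer (of_nat j) j
        / (3 ^ (j - 1) * pochhammer 1 (j - t) * pochhammer 1 (t - k)
           * pochhammer (of_int (3 - int k + 2 * int n - 2 * int t) + 2 * l) k)
      = 2 * pochhammer (of_nat j) j / (3 ^ (j - 1) * fact (k - 1) * fact (j - k)) *
        ((-1) ^ (j - t) * of_nat ((j - k) choose (j - t)) *
         (\<Sum>r\<le>k - 1. (-1) ^ r * of_nat ((k - 1) choose r) * recip_fun n l j (0 + int (j - k + 2 * (j - t) + r))))"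
proof -
  define z where "z = of_int (3 - int k + 2 * int n - 2 * int t) + 2 * l"
  have "Suc (k - 1) = k"
    using k by simp
  then have "1 / pochhammer z k =
      1 / fact (k - 1) * (\<Sum>r\<le>k - 1. (-1) ^ r * of_nat ((k - 1) choose r) / (z + of_nat r))"
    using sum_alternating_binomial_div[of z "k - 1"] nz unfolding z_def by simp
  also have "(\<Sum>r\<le>k - 1. (-1) ^ r * of_nat ((k - 1) choose r) / (z + of_nat r)) =
      (\<Sum>r\<le>k - 1. (-1) ^ r * of_nat ((k - 1) choose r) * recip_fun n l j (0 + int (j - k + 2 * (j - t) + r)))"
    using k by (intro sum.cong refl) (simp add: recip_fun_def z_def of_nat_diff algebra_simps)
  finally have inv: "1 / pochhammer z k = 1 / fact (k - 1) *
      (\<Sum>r\<le>k - 1. (-1) ^ r * of_nat ((k - 1) choose r) * recip_fun n l j (0 + int (j - k + 2 * (j - t) + r)))" .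
  have "t + j = (j - t) + 2 * t"
    using k by simp
  then have "(-1::'a) ^ (t + j) = (-1) ^ (j - t) * ((-1) ^ 2) ^ t"
    by (simp only: power_add power_mult)
  then have sgn: "(-1::'a) ^ (t + j) = (-1) ^ (j - t)"
    by simp
  have binom: "of_nat ((j - k) choose (j - t)) / fact (j - k) = (1::'a) / (fact (j - t) * fact (t - k))"
  proof -
    have "j - t \<le> j - k" "j - k - (j - t) = t - k"
      using k by auto
    thus ?thesis by (simp add: binomial_fact)
  qed
  have "2 * (-1) ^ (t + j) * pochhammer (of_nat j) j
        / (3 ^ (j - 1) * pochhammer 1 (j - t) * pochhammer 1 (t - k) * pochhammer z k)
      = 2 * pochhammer (of_nat j) j / 3 ^ (j - 1) * (-1) ^ (j - t) *
        ((1::'a) / (fact (j - t) * fact (t - k))) * (1 / pochhammer z k)"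
    by (simp add: sgn pochhammer_fact[symmetric] mult_ac)
  also have "\<dots> = 2 * pochhammer (of_nat j) j / 3 ^ (j - 1) * (-1) ^ (j - t) *
      (of_nat ((j - k) choose (j - t)) / fact (j - k)) * (1 / fact (k - 1) *
      (\<Sum>r\<le>k - 1. (-1) ^ r * of_nat ((k - 1) choose r) * recip_fun n l j (0 + int (j - k + 2 * (j - t) + r))))"
    by (simp only: binom inv)
  finally show ?thesis
    unfolding z_def by (simp add: field_simps)
qed

lemma ymat_eq_shift_op:
  fixes l :: "'a::field_char_0"
  assumes k: "1 \<le> k" "k \<le> j"
    and nz: "\<And>t. k \<le> t \<Longrightarrow> t \<le> j \<Longrightarrow>
      pochhammer (of_int (3 - int k + 2 * int n - 2 * int t) + 2 * l) k \<noteq> 0"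
  shows "ymat n l k j = 2 * pochhammer (of_nat j) j / (3 ^ (j - 1) * fact (k - 1) * fact (j - k)) *
    shift_op (kernel_fst_factor (j - 1) (k - 1)) (recip_fun n l j) 0"
proof -
  let ?C = "2 * pochhammer (of_nat j) j / (3 ^ (j - 1) * fact (k - 1) * fact (j - k)) :: 'a"
  let ?H = "\<lambda>s. (-1) ^ s * of_nat ((j - k) choose s) *
    (\<Sum>r\<le>k - 1. (-1) ^ r * of_nat ((k - 1) choose r) * recip_fun n l j (0 + int (j - k + 2 * s + r)))"
  have "ymat n l k j = (\<Sum>t = k..j. ?C * ?H (j - t))"
    unfolding ymat_def using k nz by (intro sum.cong refl ymat_summand_eq) auto
  also have "\<dots> = (\<Sum>s\<le>j - k. ?C * ?H s)"
    by (rule sum.reindex_bij_witness[where i="\<lambda>s. j - s" and j="\<lambda>t. j - t"]) (use k in auto)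
  also have "\<dots> = ?C * shift_op (kernel_fst_factor (j - 1) (k - 1)) (recip_fun n l j) 0"
  proof -
    have "j - 1 - (k - 1) = j - k"
      using k by simp
    thus ?thesis
      using k by (simp add: shift_op_kernel_fst_factor sum_distrib_left)
  qed
  finally show ?thesis .
qed

lemma bmat_eq_shift_op:
  fixes l :: "'a::field_char_0"
  assumes "1 \<le> k"
  shows "bmat n l i k = (-1) ^ k * shift_op (kernel_snd_factor (k - 1)) (binom_fun n l i) 0"
  unfolding bmat_def shift_op_kernel_snd_factor sum_distrib_left atMost_atLeast0
  using assms by (intro sum.cong refl) (simp add: binom_fun_def of_nat_diff algebra_simps)

lemma bmat_ymat_sum_eq_kernel_op:
  fixes l :: "'a::field_char_0"
  assumes j: "1 \<le> j" "j \<le> n"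
    and nopole: "\<And>k t. 1 \<le> k \<Longrightarrow> k \<le> t \<Longrightarrow> t \<le> j \<Longrightarrow>
      pochhammer (of_int (3 - int k + 2 * int n - 2 * int t) + 2 * l) k \<noteq> 0"
  shows "(\<Sum>k = 1..n. bmat n l i k * ymat n l k j) =
    2 * pochhammer (of_nat j) j / (3 ^ (j - 1) * fact (j - 1)) *
    shift_op2 (kernel_op (j - 1)) (\<lambda>e x. recip_fun n l j e * binom_fun n l i x) 0 0"
proof -
  let ?m = "j - 1"
  let ?C = "2 * pochhammer (of_nat j) j / (3 ^ (j - 1) * fact ?m) :: 'a"
  have "(\<Sum>k = 1..n. bmat n l i k * ymat n l k j) = (\<Sum>k = 1..j. bmat n l i k * ymat n l k j)"
    by (rule sum.mono_neutral_right) (use j in \<open>auto simp: ymat_def\<close>)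
  also have "\<dots> = (\<Sum>k\<le>?m. bmat n l i (k + 1) * ymat n l (k + 1) j)"
    by (rule sum.reindex_bij_witness[where i="\<lambda>k. k + 1" and j="\<lambda>k. k - 1"]) (use j in auto)
  also have "\<dots> = (\<Sum>k\<le>?m. ?C * (of_nat (?m choose k) * (-1) ^ (k + 1) *
      (shift_op (kernel_fst_factor ?m k) (recip_fun n l j) 0 * shift_op (kernel_snd_factor k) (binom_fun n l i) 0)))"
  proof (intro sum.cong refl)
    fix k assume k: "k \<in> {..?m}"
    have "ymat n l (k + 1) j = 2 * pochhammer (of_nat j) j /
        (3 ^ (j - 1) * fact (k + 1 - 1) * fact (j - (k + 1))) *
        shift_op (kernel_fst_factor (j - 1) (k + 1 - 1)) (recip_fun n l j) 0"
      using j k by (intro ymat_eq_shift_op nopole) auto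
    moreover have "k + 1 - 1 = k" "j - (k + 1) = ?m - k"
      by auto
    ultimately have "ymat n l (k + 1) j = 2 * pochhammer (of_nat j) j / (3 ^ (j - 1) * fact k * fact (?m - k)) *
        shift_op (kernel_fst_factor ?m k) (recip_fun n l j) 0"
      by (simp only:)
    moreover have "bmat n l i (k + 1) = (-1) ^ (k + 1) * shift_op (kernel_snd_factor k) (binom_fun n l i) 0"
      using bmat_eq_shift_op[of "k + 1" n l i] by simp
    moreover have "1 / (fact k * fact (?m - k)) = of_nat (?m choose k) / (fact ?m :: 'a)"
      using k by (simp add: binomial_fact)
    ultimately show "bmat n l i (k + 1) * ymat n l (k + 1) j = ?C * (of_nat (?m choose k) * (-1) ^ (k + 1) *
        (shift_op (kernel_fst_factor ?m k) (recip_fun n l j) 0 * shift_op (kernel_snd_factor k) (binom_fun n l i) 0))"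
      using k by (simp add: field_simps)
  qed
  also have "\<dots> = ?C * shift_op2 (kernel_op ?m) (\<lambda>e x. recip_fun n l j e * binom_fun n l i x) 0 0"
    by (simp add: shift_op2_kernel_op_tensor sum_distrib_left)
  finally show ?thesis .
qed

section \<open>Symmetrization\<close>

text \<open>With \<open>t = \<lfloor>v/3\<rfloor> + 1\<close> and \<open>r = v - 2t < t\<close>, the Pochhammer symbol of the hypothesis for
  \<open>k = t\<close> would have the vanishing factor with index \<open>t - 1 - r\<close>.\<close>

lemma nopole_excludes_integers:
  fixes l :: "'a::field_char_0"
  assumes nopole: "\<And>k t. 1 \<le> k \<Longrightarrow> k \<le> t \<Longrightarrow> t \<le> n \<Longrightarrow>
      pochhammer (of_int (3 - int k + 2 * int n - 2 * int t) + 2 * l) k \<noteq> 0"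
    and v: "2 \<le> v" "v + 1 \<le> 3 * n" "v \<noteq> 3"
  shows "2 * (of_nat n + l) + 2 \<noteq> of_nat v"
proof
  assume A: "2 * (of_nat n + l) + 2 = of_nat v"
  obtain q d where qd: "v = 3 * q + d" "d < 3"
    using div_mult_mod_eq[of v 3] mod_less_divisor[of 3 v] by (metis mult.commute zero_less_numeral)
  define t where "t = q + 1"
  define r where "r = v - 2 * t"
  have t: "1 \<le> t" "t \<le> n" "2 * t \<le> v" "r < t"
    using v qd unfolding t_def r_def by presburger+
  have "of_int (3 - int t + 2 * int n - 2 * int t) + 2 * l = - (of_nat (t - 1 - r) :: 'a)"
  proof -
    have "(of_nat v :: 'a) = of_nat (2 * t + r)"
      using t unfolding r_def by simp
    with A have "2 * (of_nat n + l) + 2 = 2 * of_nat t + (of_nat r :: 'a)"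
      by simp
    with t show ?thesis
      by (simp add: of_nat_diff algebra_simps)
  qed
  moreover have "t - 1 - r < t"
    using t by simp
  ultimately have "pochhammer (of_int (3 - int t + 2 * int n - 2 * int t) + 2 * l) t = (0::'a)"
    by (auto simp: pochhammer_eq_0_iff)
  with nopole[of t t] t show False
    by simp
qed

lemma nopole_pole_position:
  fixes l :: "'a::field_char_0"
  assumes nopole: "\<And>k t. 1 \<le> k \<Longrightarrow> k \<le> t \<Longrightarrow> t \<le> n \<Longrightarrow>
      pochhammer (of_int (3 - int k + 2 * int n - 2 * int t) + 2 * l) k \<noteq> 0"
    and "m + 1 \<le> n" "w \<le> 3 * m"
    and pole: "2 * (of_nat n + l) + 2 - 3 * of_nat (m + 1) + of_int (int w) + 1 = (0::'a)"
  shows "w + 1 = 3 * m"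
proof -
  have "2 * (of_nat n + l) + 2 = (of_nat (3 * m + 2 - w) :: 'a)"
    using pole \<open>w \<le> 3 * m\<close> by (simp add: of_nat_diff algebra_simps)
  moreover have "2 \<le> 3 * m + 2 - w" "3 * m + 2 - w + 1 \<le> 3 * n"
    using assms(2,3) by auto
  ultimately have "3 * m + 2 - w = 3"
    using nopole_excludes_integers[OF nopole] by blast
  then show ?thesis
    by simp
qed

text \<open>The exponents of \<open>X\<close> in \<open>kernel_fst_factor m k\<close> avoid \<open>3m - 1\<close>: they are \<open>m + 2s\<close> for
  \<open>k = 0\<close> and at most \<open>3m - 2k\<close> otherwise.\<close>

lemma shift_op2_kernel_op_point_mass:
  fixes h :: "int \<Rightarrow> 'a::comm_ring_1"
  assumes "\<And>w. w \<le> 3 * m \<Longrightarrow> e0 = int w \<Longrightarrow> w + 1 = 3 * m"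
  shows "shift_op2 (kernel_op m) (\<lambda>e x. (if e = e0 then 1 else 0) * h x) 0 0 = 0"
  unfolding shift_op2_kernel_op_tensor
proof (intro sum.neutral ballI)
  fix k assume "k \<in> {..m}"
  then have k: "k \<le> m"
    by simp
  have "0 + int (m - k + 2 * s + r) \<noteq> e0" if "s \<le> m - k" "r \<le> k" for s r
  proof
    assume "0 + int (m - k + 2 * s + r) = e0"
    moreover have "m - k + 2 * s + r \<le> 3 * m" "m - k + 2 * s + r + 1 \<noteq> 3 * m"
      using k that by presburger+
    ultimately show False
      using assms[of "m - k + 2 * s + r"] by simp
  qed
  then have "shift_op (kernel_fst_factor m k) (\<lambda>e. if e = e0 then 1 else (0::'a)) 0 = 0"
    unfolding shift_op_kernel_fst_factor[OF k] by (intro sum.neutral ballI) (simp add: sum.neutral)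
  then show "of_nat (m choose k) * (-1) ^ (k + 1) * (shift_op (kernel_fst_factor m k)
      (\<lambda>e. if e = e0 then 1 else 0) 0 * shift_op (kernel_snd_factor k) h 0) = 0"
    by simp
qed

lemma shift_op2_kernel_op_vanishes_off_pole:
  fixes c :: "'a::field_char_0"
  assumes vanish: "\<And>e x. c + of_int e + 1 \<noteq> 0 \<Longrightarrow> D e x = 0"
    and pole: "\<And>w. w \<le> 3 * m \<Longrightarrow> c + of_int (int w) + 1 = 0 \<Longrightarrow> w + 1 = 3 * m"
  shows "shift_op2 (kernel_op m) D 0 0 = 0"
proof (cases "\<exists>e0. c + of_int e0 + 1 = 0")
  case True
  then obtain e0 where e0: "c + of_int e0 + 1 = 0"
    by blast
  have "D e x = (if e = e0 then 1 else 0) * D e0 x" for e x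
  proof (cases "e = e0")
    case False
    have "c + of_int e + 1 = (c + of_int e0 + 1) + of_int (e - e0)"
      by (simp add: algebra_simps)
    also have "\<dots> = of_int (e - e0)"
      unfolding e0 by simp
    finally have "c + of_int e + 1 = of_int (e - e0)" .
    then have "c + of_int e + 1 \<noteq> 0"
      using False by (simp only:) simp
    with False show ?thesis
      by (simp add: vanish)
  qed simp
  then have "shift_op2 (kernel_op m) D 0 0 =
      shift_op2 (kernel_op m) (\<lambda>e x. (if e = e0 then 1 else 0) * D e0 x) 0 0"
    by (intro shift_op2_cong)
  also have "\<dots> = 0"
    using e0 pole by (intro shift_op2_kernel_op_point_mass) auto
  finally show ?thesis .
next
  case False
  then have "shift_op2 (kernel_op m) D 0 0 = shift_op2 (kernel_op m) (\<lambda>e x. 0) 0 0"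
    by (intro shift_op2_cong) (simp add: vanish)
  then show ?thesis
    by simp
qed

lemma gbinomial_odd_reflect:
  fixes a :: "'a::field_char_0"
  assumes "odd M"
  shows "a gchoose M = - ((of_nat M - a - 1) gchoose M)"
  using gbinomial_negated_upper[of a M] assms by simp

lemma gbinomial_Vandermonde_div:
  fixes u v :: "'a::field_char_0"
  assumes "u + 1 \<noteq> 0" "1 \<le> M"
  shows "1 / (u + 1) * ((u + 1 + v) gchoose M) = 1 / (u + 1) * (v gchoose M) +
    (\<Sum>q<M. 1 / of_nat (q + 1) * ((u gchoose q) * (v gchoose (M - 1 - q))))"
proof -
  obtain M' where M': "M = Suc M'"
    using assms(2) by (cases M) auto
  have "(u + 1 + v) gchoose M = (\<Sum>k\<le>M. ((u + 1) gchoose k) * (v gchoose (M - k)))"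
    using gbinomial_Vandermonde[of "u + 1" v M] by (simp add: atMost_atLeast0)
  also have "\<dots> = (v gchoose M) + (\<Sum>q<M. ((u + 1) gchoose Suc q) * (v gchoose (M - 1 - q)))"
    unfolding M' by (subst sum.atMost_Suc_shift) (simp add: lessThan_Suc_atMost)
  finally have vdm: "(u + 1 + v) gchoose M =
      (v gchoose M) + (\<Sum>q<M. ((u + 1) gchoose Suc q) * (v gchoose (M - 1 - q)))" .
  have absorb: "1 / (u + 1) * ((u + 1) gchoose Suc q) = 1 / of_nat (q + 1) * (u gchoose q)" for q
  proof -
    have "of_nat (Suc q) * ((u + 1) gchoose Suc q) = (u + 1) * (u gchoose q)"
      using gbinomial_absorption[of q "u + 1"] by simp
    with assms(1) show ?thesis
      by (simp add: field_simps del: of_nat_Suc)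
  qed
  show ?thesis
    unfolding vdm distrib_left sum_distrib_left
    by (simp only: mult.assoc[symmetric] absorb)
qed

lemma shift_op2_kernel_op_recip_binom_reflect:
  fixes n :: nat and l :: "'a::field_char_0"
  assumes i: "1 \<le> i" and j: "j = m + 1"
  defines "c \<equiv> 2 * (of_nat n + l) + 2 - 3 * of_nat j" and "b \<equiv> of_nat i - of_nat n - l - 2"
  shows "shift_op2 (kernel_op m) (\<lambda>e x. recip_fun n l j e * binom_fun n l i x) 0 0 =
    - shift_op2 (kernel_op m)
        (\<lambda>e x. 1 / (c + of_int e + 1) * ((c + of_int e + 1 + (b + of_int x)) gchoose (2 * i - 1))) 0 0"
proof -
  have "binom_fun n l i (int (3 * m + 2) - e - x) = - ((c + of_int e + 1 + (b + of_int x)) gchoose (2 * i - 1))"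
    for e x
  proof -
    have "odd (2 * i - 1)"
      using i by simp
    moreover have "of_nat (2 * i - 1) - (b + of_int (int (3 * m + 2) - e - x)) - 1 =
        c + of_int e + 1 + (b + of_int x)"
      using i unfolding b_def c_def j by (simp add: of_nat_diff algebra_simps)
    ultimately show ?thesis
      unfolding binom_fun_def b_def[symmetric]
      by (subst gbinomial_odd_reflect) (simp_all only: not_False_eq_True)
  qed
  note binom_reflect = this
  have "shift_op2 (kernel_op m) (\<lambda>e x. recip_fun n l j e * binom_fun n l i x) 0 0 =
      shift_op2 (kernel_op m) (\<lambda>e x. recip_fun n l j e * binom_fun n l i (int (3 * m + 2) - e - x)) 0 0"
    by (rule shift_op2_kernel_op_reflect[symmetric])
  also have "\<dots> = shift_op2 (kernel_op m)
      (\<lambda>e x. (-1) * (1 / (c + of_int e + 1) * ((c + of_int e + 1 + (b + of_int x)) gchoose (2 * i - 1)))) 0 0"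
  proof (rule shift_op2_cong)
    fix e x
    have "recip_fun n l j e = 1 / (c + of_int e + 1)"
      unfolding recip_fun_def c_def ..
    then show "recip_fun n l j e * binom_fun n l i (int (3 * m + 2) - e - x) =
        (-1) * (1 / (c + of_int e + 1) * ((c + of_int e + 1 + (b + of_int x)) gchoose (2 * i - 1)))"
      by (simp only: binom_reflect mult_minus1 mult_minus_right)
  qed
  also have "\<dots> = - shift_op2 (kernel_op m)
      (\<lambda>e x. 1 / (c + of_int e + 1) * ((c + of_int e + 1 + (b + of_int x)) gchoose (2 * i - 1))) 0 0"
    by (simp only: shift_op2_fun_cmult) simp
  finally show ?thesis .
qed

text \<open>Vandermonde's identity splits the reflected function into \<open>recip \<otimes> binom\<close> plus products of
  lower degree, up to a remainder supported on the pole.\<close>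

lemma shift_op2_kernel_op_recip_binom:
  fixes l :: "'a::field_char_0"
  assumes i: "1 \<le> i" and j: "j = m + 1" "j \<le> n"
    and nopole: "\<And>k t. 1 \<le> k \<Longrightarrow> k \<le> t \<Longrightarrow> t \<le> n \<Longrightarrow>
      pochhammer (of_int (3 - int k + 2 * int n - 2 * int t) + 2 * l) k \<noteq> 0"
  defines "c \<equiv> 2 * (of_nat n + l) + 2 - 3 * of_nat j" and "b \<equiv> of_nat i - of_nat n - l - 2"
  shows "2 * shift_op2 (kernel_op m) (\<lambda>e x. recip_fun n l j e * binom_fun n l i x) 0 0 =
    - (\<Sum>q<2 * i - 1. 1 / of_nat (q + 1) * shift_op2 (kernel_op m)
        (\<lambda>e x. ((c + of_int e) gchoose q) * ((b + of_int x) gchoose (2 * i - 1 - 1 - q))) 0 0)"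
proof -
  define M where "M = 2 * i - 1"
  define G where "G = (\<lambda>e x. recip_fun n l j e * binom_fun n l i x)"
  define H where "H = (\<lambda>e x. 1 / (c + of_int e + 1) * ((c + of_int e + 1 + (b + of_int x)) gchoose M))"
  define S where "S = (\<lambda>e x. \<Sum>q<M. 1 / of_nat (q + 1) *
      (((c + of_int e) gchoose q) * ((b + of_int x) gchoose (M - 1 - q))))"
  have reflect: "shift_op2 (kernel_op m) G 0 0 = - shift_op2 (kernel_op m) H 0 0"
    unfolding G_def H_def M_def c_def b_def by (rule shift_op2_kernel_op_recip_binom_reflect[OF i j(1)])
  have "shift_op2 (kernel_op m) (\<lambda>e x. H e x - (G e x + S e x)) 0 0 = 0"
  proof (rule shift_op2_kernel_op_vanishes_off_pole)
    show "H e x - (G e x + S e x) = 0" if "c + of_int e + 1 \<noteq> 0" for e x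
      using gbinomial_Vandermonde_div[OF that, of M "b + of_int x"] i
      unfolding G_def H_def S_def recip_fun_def binom_fun_def c_def b_def M_def by (simp add: algebra_simps)
    show "w + 1 = 3 * m" if "w \<le> 3 * m" "c + of_int (int w) + 1 = 0" for w
      using nopole_pole_position[OF nopole, of m w] that j unfolding c_def by simp
  qed
  moreover have "shift_op2 (kernel_op m) H 0 0 =
      shift_op2 (kernel_op m) (\<lambda>e x. (G e x + S e x) + (H e x - (G e x + S e x))) 0 0"
    by (rule shift_op2_cong) simp
  ultimately have "shift_op2 (kernel_op m) H 0 0 =
      shift_op2 (kernel_op m) G 0 0 + shift_op2 (kernel_op m) S 0 0"
    by (simp only: shift_op2_fun_add) simp
  with reflect have "2 * shift_op2 (kernel_op m) G 0 0 = - shift_op2 (kernel_op m) S 0 0"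
    by (simp add: algebra_simps eq_neg_iff_add_eq_0)
  moreover have "shift_op2 (kernel_op m) S 0 0 = (\<Sum>q<M. 1 / of_nat (q + 1) * shift_op2 (kernel_op m)
      (\<lambda>e x. ((c + of_int e) gchoose q) * ((b + of_int x) gchoose (M - 1 - q))) 0 0)"
    unfolding S_def by (simp only: shift_op2_fun_sum shift_op2_fun_cmult)
  ultimately show ?thesis
    unfolding G_def M_def by (simp only:)
qed

lemma shift_op2_kernel_op_recip_binom_value:
  fixes l :: "'a::field_char_0"
  assumes i: "1 \<le> i" "i \<le> j" and j: "j = m + 1" "j \<le> n"
    and nopole: "\<And>k t. 1 \<le> k \<Longrightarrow> k \<le> t \<Longrightarrow> t \<le> n \<Longrightarrow>
      pochhammer (of_int (3 - int k + 2 * int n - 2 * int t) + 2 * l) k \<noteq> 0"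
  shows "2 * shift_op2 (kernel_op m) (\<lambda>e x. recip_fun n l j e * binom_fun n l i x) 0 0 =
    (if i = j then 3 ^ m * fact m / pochhammer (of_nat j) j else 0)"
proof -
  let ?c = "2 * (of_nat n + l) + 2 - 3 * of_nat j :: 'a"
  let ?b = "of_nat i - of_nat n - l - 2 :: 'a"
  have "2 * i - 1 = 2 * m + 1 \<longleftrightarrow> i = j" "2 * i - 1 \<le> 2 * m + 1"
    using i j by auto
  then have "(\<Sum>q<2 * i - 1. 1 / of_nat (q + 1) * shift_op2 (kernel_op m)
      (\<lambda>e x. ((?c + of_int e) gchoose q) * ((?b + of_int x) gchoose (2 * i - 1 - 1 - q))) 0 0) =
      (if i = j then - (3 ^ m * fact m / pochhammer (of_nat j) j) else 0)"
    using shift_op2_kernel_op_gbinomial_sum[of "2 * i - 1" m ?c ?b] j by simp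
  then show ?thesis
    using shift_op2_kernel_op_recip_binom[OF i(1) j nopole] by simp
qed

theorem lemma5p1:
  fixes n :: nat and l :: "'a::field_char_0"
  assumes "n \<ge> 1"
    and nopole: "\<And>k t. 1 \<le> k \<Longrightarrow> k \<le> t \<Longrightarrow> t \<le> n \<Longrightarrow>
          pochhammer (of_int (3 - int k + 2 * int n - 2 * int t) + 2 * l) k \<noteq> 0"
  shows "\<forall>i j. 1 \<le> i \<longrightarrow> i \<le> j \<longrightarrow> j \<le> n \<longrightarrow>
           (\<Sum>k = 1..n. bmat n l i k * ymat n l k j) = (if i = j then 1 else 0)"
proof (intro allI impI)
  fix i j :: nat
  assume i: "1 \<le> i" and ij: "i \<le> j" and jn: "j \<le> n"
  define m where "m = j - 1"
  have j: "j = m + 1"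
    using i ij unfolding m_def by simp
  let ?P = "pochhammer (of_nat j) j :: 'a"
  let ?K = "shift_op2 (kernel_op m) (\<lambda>e x. recip_fun n l j e * binom_fun n l i x) 0 0"
  have "(\<Sum>k = 1..n. bmat n l i k * ymat n l k j) = ?P / (3 ^ m * fact m) * (2 * ?K)"
    using bmat_ymat_sum_eq_kernel_op[of j n l i] i ij jn nopole unfolding m_def by simp
  also have "2 * ?K = (if i = j then 3 ^ m * fact m / ?P else 0)"
    by (rule shift_op2_kernel_op_recip_binom_value[OF i ij j jn nopole])
  finally show "(\<Sum>k = 1..n. bmat n l i k * ymat n l k j) = (if i = j then 1 else 0)"
    using pochhammer_of_nat_neq_0[of j j, where 'a='a] i ij by simp
qed

end
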